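(* Let $J,K\in\mathbb{R}\cup\{\infty\}$. Each of the following product measures $\mu\times\nu$ of probability measures on $\mathbb{R}$ satisfies $F^{(J,K)}_{udK}(\mu\times\nu)=\mu\times\nu$. (a)(i) $\mu\times\nu=\mathrm{stExp}(\lambda,c,J-c)\times\mathrm{stExp}(\lambda,c,K-c)$, where $c<\min\{J/2,K/2\}$ is finite and $\lambda\in\mathbb{R}$ if $\max\{J,K\}<\infty$, $\lambda>0$ if $\max\{J,K\}=\infty$. (a)(ii) $\mu\times\nu=\mathrm{sstbGeo}(1-\theta,\frac{c}{m},\frac{J-c}{m},\kappa,m)\times\mathrm{sstbGeo}(1-\theta,\frac{c}{m},\frac{K-c}{m},\kappa,m)$, where $c<\min\{J/2,K/2\}$ is finite, $m>0$, $c,J,K\in m\mathbb{Z}\cup\{\infty\}$, and one of the following holds: $J-2c,K-2c\in m\mathbb{Z}\cup\{\infty\}$, $\theta\in(0,1)$, $\kappa=1$; or $J-2c,K-2c\in2m\mathbb{Z}\cup\{\infty\}$, $\theta\in(0,1)$, $\kappa\in(0,\infty)\setminus\{1\}$; or $J-2c,K-2c\in m\mathbb{Z}$, $\theta\ge1$, $\kappa=1$; or $J-2c,K-2c\in2m\mathbb{Z}\cup\{\infty\}$, $\theta\ge1$, $\kappa\in(0,\infty)\setminus\{1\}$. (b) If $J=K$: $\mu\times\nu=m\times m$ for any probability measure $m$ on $\mathbb{R}$. (c) If $J<K$: (i) $\mu\times\nu=m\times m$ for any probability measure $m$ supported on $(-\infty,J/2]$; (ii) $\mu\times\nu=\delta_{J/2}\times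 m$ for any probability measure $m$ supported on $[J/2,K-J/2]$; (iii) if moreover $K<\infty$, $\mu\times\nu=m\times(m+L)$ for any probability measure $m$ supported on $[J/2,\infty)$, where $L:=K-J$ and $(m+L)(A):=m(\{x-L:x\in A\})$.
   Context: The ultra-discrete KdV map $F^{(J,K)}_{udK}:\mathbb{R}^2\to\mathbb{R}^2$ is $F^{(J,K)}_{udK}(x,u):=\big(u-\max\{x+u-J,0\}+\max\{x+u-K,0\},\;x-\max\{x+u-K,0\}+\max\{x+u-J,0\}\big)$, with the convention that a term $\max\{x+u-\infty,0\}$ equals $0$. $F(m):=m\circ F^{-1}$ is the pushforward; $\delta_x$ is the Dirac mass at $x$. Distributions: $\mathrm{stExp}(\lambda,c_1,c_2)$ ($c_1<c_2$) has density proportional to $e^{-\lambda x}\mathbf{1}_{[c_1,c_2]}(x)$, with $c_2=\infty$ allowed when $\lambda>0$. For $\theta>0$, $M\in\mathbb{Z}$, $N\in\mathbb{Z}\cup\{\infty\}$ with $M\le N$, $\kappa>0$, $m>0$, $X\sim\mathrm{sstbGeo}(1-\theta,M,N,\kappa,m)$ means $\mathbf{P}(X=mx)=Z^{-1}\theta^x\kappa^{\iota(x)}$ for $x\in\{M,M+1,\dots,N\}$, where $\iota(x)=0$ for $x$ even and $1$ for $x$ odd, $Z$ a normalizing constant (if $N=\infty$ one needs $\theta<1$). *)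

theory Defs
  imports "HOL-Probability.Probability"
begin

text \<open>Parameters J, K range over \<real> \<union> {\<infinity>}; we use ereal (with J, K \<noteq> -\<infinity> assumed).
  The term max{s - J, 0}, with the convention that it is 0 when J = \<infinity>.\<close>
definition udK_term :: "ereal \<Rightarrow> real \<Rightarrow> real" where
  "udK_term J s = (case J of ereal j \<Rightarrow> max (s - j) 0 | _ \<Rightarrow> 0)"

definition udK :: "ereal \<Rightarrow> ereal \<Rightarrow> real \<times> real \<Rightarrow> real \<times> real" where
  "udK J K p = (let x = fst p; u = snd p in
     (u - udK_term J (x + u) + udK_term K (x + u),
      x - udK_term K (x + u) + udK_term J (x + u)))"

definition udK_invariant :: "ereal \<Rightarrow> ereal \<Rightarrow> real measure \<Rightarrow> real measure \<Rightarrow> bool" where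
  "udK_invariant J K \<mu> \<nu> \<longleftrightarrow>
     distr (\<mu> \<Otimes>\<^sub>M \<nu>) (borel \<Otimes>\<^sub>M borel) (udK J K) = \<mu> \<Otimes>\<^sub>M \<nu>"

definition real_prob :: "real measure \<Rightarrow> bool" where
  "real_prob M \<longleftrightarrow> prob_space M \<and> sets M = sets borel"

definition stExp_weight :: "real \<Rightarrow> real \<Rightarrow> ereal \<Rightarrow> real \<Rightarrow> ennreal" where
  "stExp_weight l c1 c2 x =
     ennreal (exp (- l * x)) * indicator {y. c1 \<le> y \<and> ereal y \<le> c2} x"

definition stExp :: "real \<Rightarrow> real \<Rightarrow> ereal \<Rightarrow> real measure" where
  "stExp l c1 c2 = density lborel
     (\<lambda>x. stExp_weight l c1 c2 x / (\<integral>\<^sup>+ y. stExp_weight l c1 c2 y \<partial>lborel))"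

text \<open>sstbGeo(p, M, N, kappa, m) with theta = 1 - p:
  P(X = m x) = Z^-1 theta^x kappa^iota(x) for integers x with M \<le> x \<le> N (N may be \<infinity>).\<close>
definition sstbGeo_weight :: "real \<Rightarrow> real \<Rightarrow> ereal \<Rightarrow> real \<Rightarrow> int \<Rightarrow> ennreal" where
  "sstbGeo_weight p M N \<kappa> x =
     (if M \<le> real_of_int x \<and> ereal (real_of_int x) \<le> N
      then ennreal ((1 - p) powi x * (if even x then 1 else \<kappa>)) else 0)"

definition sstbGeo :: "real \<Rightarrow> real \<Rightarrow> ereal \<Rightarrow> real \<Rightarrow> real \<Rightarrow> real measure" where
  "sstbGeo p M N \<kappa> m = distr
     (density (count_space UNIV)
        (\<lambda>x. sstbGeo_weight p M N \<kappa> x / (\<integral>\<^sup>+ y. sstbGeo_weight p M N \<kappa> y \<partial>count_space UNIV)))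
     borel (\<lambda>x. m * real_of_int x)"

definition in_mZ_inf :: "real \<Rightarrow> ereal \<Rightarrow> bool" where
  "in_mZ_inf m J \<longleftrightarrow> J = \<infinity> \<or> (\<exists>k::int. J = ereal (m * real_of_int k))"

definition in_mZ :: "real \<Rightarrow> ereal \<Rightarrow> bool" where
  "in_mZ m J \<longleftrightarrow> (\<exists>k::int. J = ereal (m * real_of_int k))"

end

theory Submission
  imports Defs
begin

text \<open>
  With s = x + u, the map is (x, u) \<mapsto> (u + \<phi> s, x - \<phi> s) where \<phi> s = max{s - K, 0} - max{s - J, 0}.
  Hence it is an involution that preserves x + u, and it preserves Lebesgue measure on the plane
  (in the coordinates s and x it acts by translations along lines, so Fubini applies) and counting
  measure on the lattice m\<int> \<times> m\<int> when J, K \<in> m\<int> \<union> {\<infinity>}. A density that is invariant under the map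
  is therefore preserved. In (a) the product density is a function of x + u (times the parity
  factor \<kappa>^\<iota>(x) \<kappa>^\<iota>(u) in the lattice case) restricted to the box [c, J - c] \<times> [c, K - c], which
  the map sends onto itself; when J, K \<in> 2m\<int> \<union> {\<infinity>} the map either keeps or swaps the parities of
  the two coordinates, so the parity factor is invariant as well. In (b) and (c) the map acts
  almost surely as the swap, as the identity, or as the swap conjugated by the shift
  (x, u) \<mapsto> (x, u + K - J), each of which preserves the product measure in question.
\<close>

definition udK_shift :: "ereal \<Rightarrow> ereal \<Rightarrow> real \<Rightarrow> real" where
  "udK_shift J K s = udK_term K s - udK_term J s"

lemma udK_eq_shift:
  "udK J K p = (snd p + udK_shift J K (fst p + snd p), fst p - udK_shift J K (fst p + snd p))"
  by (simp add: udK_def udK_shift_def Let_def)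

lemma udK_udK [simp]: "udK J K (udK J K p) = p"
  by (subst (1 2) udK_eq_shift) (simp add: add.commute)

lemma udK_fst_plus_snd: "fst (udK J K p) + snd (udK J K p) = fst p + snd p"
  by (simp add: udK_eq_shift)

lemma udK_term_eq_0: "ereal s \<le> J \<Longrightarrow> udK_term J s = 0"
  by (cases J) (simp_all add: udK_term_def)

lemma borel_measurable_udK_term [measurable]: "udK_term J \<in> borel_measurable borel"
  by (cases J) (simp_all add: udK_term_def[abs_def])

lemma borel_measurable_udK_shift [measurable]: "udK_shift J K \<in> borel_measurable borel"
  unfolding udK_shift_def[abs_def] by measurable

lemma measurable_udK [measurable]: "udK J K \<in> measurable (borel \<Otimes>\<^sub>M borel) (borel \<Otimes>\<^sub>M borel)"
  by (subst udK_eq_shift[abs_def]) measurable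

definition udK_box :: "ereal \<Rightarrow> ereal \<Rightarrow> real \<Rightarrow> (real \<times> real) set" where
  "udK_box J K c = {p. c \<le> fst p \<and> ereal (fst p) \<le> J - ereal c \<and> c \<le> snd p \<and> ereal (snd p) \<le> K - ereal c}"

lemma udK_in_box:
  assumes "ereal c < J / 2" "ereal c < K / 2" "p \<in> udK_box J K c"
  shows "udK J K p \<in> udK_box J K c"
  using assms by (cases p; cases J; cases K) (auto simp: udK_box_def udK_def udK_term_def Let_def max_def)

lemma udK_in_box_iff:
  assumes "ereal c < J / 2" "ereal c < K / 2"
  shows "udK J K p \<in> udK_box J K c \<longleftrightarrow> p \<in> udK_box J K c"
  using udK_in_box[OF assms, of p] udK_in_box[OF assms, of "udK J K p"] by auto

lemma measurable_lborel_pair [simp]: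
  "measurable (lborel \<Otimes>\<^sub>M lborel) M = measurable (borel \<Otimes>\<^sub>M borel) M"
  by (intro measurable_cong_sets sets_pair_measure_cong) simp_all

lemma nn_integral_lborel_translate:
  fixes g :: "real \<Rightarrow> ennreal"
  assumes "g \<in> borel_measurable borel"
  shows "(\<integral>\<^sup>+x. g (t + x) \<partial>lborel) = integral\<^sup>N lborel g"
  using nn_integral_real_affine[OF assms, of 1 t] by simp

lemma nn_integral_lborel_pair_shear:
  fixes H :: "real \<times> real \<Rightarrow> ennreal"
  assumes [measurable]: "H \<in> borel_measurable (borel \<Otimes>\<^sub>M borel)" "\<phi> \<in> borel_measurable borel"
  shows "(\<integral>\<^sup>+p. H (snd p + \<phi> (fst p + snd p), fst p - \<phi> (fst p + snd p)) \<partial>(lborel \<Otimes>\<^sub>M lborel))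
     = integral\<^sup>N (lborel \<Otimes>\<^sub>M lborel) H"
proof -
  have "(\<integral>\<^sup>+p. H (snd p + \<phi> (fst p + snd p), fst p - \<phi> (fst p + snd p)) \<partial>(lborel \<Otimes>\<^sub>M lborel))
     = (\<integral>\<^sup>+x. \<integral>\<^sup>+u. H (u + \<phi> (x + u), x - \<phi> (x + u)) \<partial>lborel \<partial>lborel)"
    by (subst lborel.nn_integral_fst[symmetric]) simp_all
  also have "\<dots> = (\<integral>\<^sup>+x. \<integral>\<^sup>+s. H (s - x + \<phi> s, x - \<phi> s) \<partial>lborel \<partial>lborel)"
    using nn_integral_lborel_translate[where g = "\<lambda>s. H (s - x + \<phi> s, x - \<phi> s)" and t = x for x]
    by simp
  also have "\<dots> = (\<integral>\<^sup>+s. \<integral>\<^sup>+x. H (s - x + \<phi> s, x - \<phi> s) \<partial>lborel \<partial>lborel)"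
    by (rule lborel_pair.Fubini'[symmetric]) simp
  also have "\<dots> = (\<integral>\<^sup>+s. \<integral>\<^sup>+y. H (s - y, y) \<partial>lborel \<partial>lborel)"
    using nn_integral_lborel_translate[where g = "\<lambda>y. H (s - y, y)" and t = "- \<phi> s" for s]
    by (simp add: algebra_simps)
  also have "\<dots> = (\<integral>\<^sup>+y. \<integral>\<^sup>+s. H (s - y, y) \<partial>lborel \<partial>lborel)"
    by (rule lborel_pair.Fubini') simp
  also have "\<dots> = (\<integral>\<^sup>+y. \<integral>\<^sup>+x. H (x, y) \<partial>lborel \<partial>lborel)"
    using nn_integral_lborel_translate[where g = "\<lambda>s. H (s - y, y)" and t = y for y]
    by simp
  also have "\<dots> = integral\<^sup>N (lborel \<Otimes>\<^sub>M lborel) H"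
    by (rule lborel_pair.nn_integral_snd) simp
  finally show ?thesis .
qed

lemma distr_udK_lborel_pair:
  "distr (lborel \<Otimes>\<^sub>M lborel) (lborel \<Otimes>\<^sub>M lborel) (udK J K) = lborel \<Otimes>\<^sub>M lborel"
proof (rule measure_eqI)
  fix A assume "A \<in> sets (distr (lborel \<Otimes>\<^sub>M lborel) (lborel \<Otimes>\<^sub>M lborel) (udK J K))"
  then have [measurable]: "A \<in> sets (borel \<Otimes>\<^sub>M borel)" by simp
  have "emeasure (distr (lborel \<Otimes>\<^sub>M lborel) (lborel \<Otimes>\<^sub>M lborel) (udK J K)) A
      = (\<integral>\<^sup>+p. indicator A p \<partial>distr (lborel \<Otimes>\<^sub>M lborel) (lborel \<Otimes>\<^sub>M lborel) (udK J K))"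
    by simp
  also have "\<dots> = (\<integral>\<^sup>+p. indicator A (udK J K p) \<partial>(lborel \<Otimes>\<^sub>M lborel))"
    by (rule nn_integral_distr) simp_all
  also have "\<dots> = emeasure (lborel \<Otimes>\<^sub>M lborel) A"
    using nn_integral_lborel_pair_shear[of "indicator A" "udK_shift J K"]
    by (simp add: udK_eq_shift[of J K])
  finally show "emeasure (distr (lborel \<Otimes>\<^sub>M lborel) (lborel \<Otimes>\<^sub>M lborel) (udK J K)) A
      = emeasure (lborel \<Otimes>\<^sub>M lborel) A" .
qed simp

lemma distr_density_involution:
  assumes [measurable]: "T \<in> measurable M M" "f \<in> borel_measurable M"
    and "\<And>x. x \<in> space M \<Longrightarrow> T (T x) = x" "distr M M T = M"
    and "\<And>x. x \<in> space M \<Longrightarrow> f (T x) = f x"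
  shows "distr (density M f) M T = density M f"
proof -
  have "distr (density (distr M M T) f) M T = density M (f \<circ> T)"
    by (rule distr_density_distr) (use assms in auto)
  also have "density M (f \<circ> T) = density M f"
    by (rule density_cong) (use assms in auto)
  finally show ?thesis using assms(4) by simp
qed

lemma udK_invariant_density:
  assumes [measurable]: "w \<in> borel_measurable (borel \<Otimes>\<^sub>M borel)" and "\<And>p. w (udK J K p) = w p"
  shows "distr (density (lborel \<Otimes>\<^sub>M lborel) w) (borel \<Otimes>\<^sub>M borel) (udK J K)
    = density (lborel \<Otimes>\<^sub>M lborel) w"
proof -
  have "distr (density (lborel \<Otimes>\<^sub>M lborel) w) (borel \<Otimes>\<^sub>M borel) (udK J K)
      = distr (density (lborel \<Otimes>\<^sub>M lborel) w) (lborel \<Otimes>\<^sub>M lborel) (udK J K)"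
    by (rule distr_cong) simp_all
  also have "\<dots> = density (lborel \<Otimes>\<^sub>M lborel) w"
  proof (rule distr_density_involution)
    show "udK J K \<in> lborel \<Otimes>\<^sub>M lborel \<rightarrow>\<^sub>M lborel \<Otimes>\<^sub>M lborel"
      by (simp add: measurable_cong_sets[OF _ sets_pair_measure_cong[OF sets_lborel sets_lborel]])
  qed (simp_all add: assms distr_udK_lborel_pair)
  finally show ?thesis .
qed

text \<open>If the total mass is \<infinity>, the normalized density is 0 (x / \<infinity> = 0 in ennreal); this is why
  no integrability condition on the parameters of stExp and sstbGeo is needed below.\<close>

lemma finite_measure_normalized_density:
  assumes "f \<in> borel_measurable M"
  shows "finite_measure (density M (\<lambda>x. f x / integral\<^sup>N M f))"
proof (rule finite_measureI)
  have "emeasure (density M (\<lambda>x. f x / integral\<^sup>N M f)) (space M) = integral\<^sup>N M f / integral\<^sup>N M f"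
    using assms by (simp add: emeasure_density nn_integral_divide)
  also have "\<dots> \<noteq> \<infinity>"
    by (simp add: ennreal_divide_eq_top_iff)
  finally show "emeasure (density M (\<lambda>x. f x / integral\<^sup>N M f))
      (space (density M (\<lambda>x. f x / integral\<^sup>N M f))) \<noteq> \<infinity>"
    by simp
qed

lemma pair_measure_normalized_density:
  assumes "sigma_finite_measure N" and [measurable]: "f \<in> borel_measurable M" "g \<in> borel_measurable N"
  shows "density M (\<lambda>x. f x / integral\<^sup>N M f) \<Otimes>\<^sub>M density N (\<lambda>y. g y / integral\<^sup>N N g)
    = density (M \<Otimes>\<^sub>M N) (\<lambda>(x, y). f x / integral\<^sup>N M f * (g y / integral\<^sup>N N g))"
proof -
  have "sigma_finite_measure (density N (\<lambda>y. g y / integral\<^sup>N N g))"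
    using finite_measure_normalized_density[of g N] finite_measure.sigma_finite_measure by simp
  then show ?thesis
    by (subst pair_measure_density) (simp_all add: assms)
qed

lemma stExp_weight_mult:
  "stExp_weight l c (J - ereal c) (fst p) * stExp_weight l c (K - ereal c) (snd p)
   = ennreal (exp (- l * (fst p + snd p))) * indicator (udK_box J K c) p"
  by (auto simp: stExp_weight_def udK_box_def indicator_def ennreal_mult'[symmetric] mult_exp_exp algebra_simps)

lemma udK_invariant_stExp:
  assumes "ereal c < J / 2" "ereal c < K / 2"
  shows "udK_invariant J K (stExp l c (J - ereal c)) (stExp l c (K - ereal c))"
proof -
  define f where "f = stExp_weight l c (J - ereal c)"
  define g where "g = stExp_weight l c (K - ereal c)"
  have [measurable]: "f \<in> borel_measurable borel" "g \<in> borel_measurable borel"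
    unfolding f_def g_def stExp_weight_def by measurable
  have "f (fst (udK J K p)) * g (snd (udK J K p)) = f (fst p) * g (snd p)" for p
    unfolding f_def g_def stExp_weight_mult by (simp add: udK_fst_plus_snd udK_in_box_iff[OF assms] indicator_def)
  then have "f (fst (udK J K p)) / integral\<^sup>N lborel f * (g (snd (udK J K p)) / integral\<^sup>N lborel g)
      = f (fst p) / integral\<^sup>N lborel f * (g (snd p) / integral\<^sup>N lborel g)" for p
    by (simp add: divide_ennreal_def ac_simps)
  then show ?thesis
    unfolding udK_invariant_def stExp_def f_def[symmetric] g_def[symmetric]
    by (simp add: pair_measure_normalized_density lborel.sigma_finite_measure_axioms
        udK_invariant_density case_prod_beta)
qed

definition lattice_point :: "real \<Rightarrow> int \<times> int \<Rightarrow> real \<times> real" where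
  "lattice_point m p = (m * real_of_int (fst p), m * real_of_int (snd p))"

text \<open>For J \<in> m\<int> the floor is exact; it only serves to make the definition total.\<close>

definition udK_term_lattice :: "ereal \<Rightarrow> real \<Rightarrow> int \<Rightarrow> int" where
  "udK_term_lattice J m n = (case J of ereal j \<Rightarrow> max (n - \<lfloor>j / m\<rfloor>) 0 | _ \<Rightarrow> 0)"

definition udK_lattice :: "ereal \<Rightarrow> ereal \<Rightarrow> real \<Rightarrow> int \<times> int \<Rightarrow> int \<times> int" where
  "udK_lattice J K m p =
    (let t = udK_term_lattice K m (fst p + snd p) - udK_term_lattice J m (fst p + snd p)
     in (snd p + t, fst p - t))"

lemma udK_term_lattice:
  assumes "m > 0" "in_mZ_inf m J"
  shows "udK_term J (m * real_of_int n) = m * real_of_int (udK_term_lattice J m n)"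
proof (cases "J = \<infinity>")
  case False
  then obtain k where "J = ereal (m * real_of_int k)"
    using assms(2) by (auto simp: in_mZ_inf_def)
  moreover have "max (m * real_of_int n - m * real_of_int k) 0 = m * real_of_int (max (n - k) 0)"
    using assms(1) by (simp add: max_def right_diff_distrib)
  ultimately show ?thesis
    using assms(1) by (simp add: udK_term_def udK_term_lattice_def)
qed (simp add: udK_term_def udK_term_lattice_def)

lemma udK_lattice_point:
  assumes "m > 0" "in_mZ_inf m J" "in_mZ_inf m K"
  shows "udK J K (lattice_point m p) = lattice_point m (udK_lattice J K m p)"
proof -
  define s where "s = fst p + snd p"
  have sum: "fst (lattice_point m p) + snd (lattice_point m p) = m * real_of_int s"
    by (simp add: lattice_point_def s_def algebra_simps)
  have "udK_shift J K (m * real_of_int s)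
      = m * real_of_int (udK_term_lattice K m s - udK_term_lattice J m s)"
    by (simp add: udK_shift_def udK_term_lattice[OF assms(1,2)] udK_term_lattice[OF assms(1,3)]
        right_diff_distrib)
  then show ?thesis
    by (simp add: udK_eq_shift[of J K "lattice_point m p"] sum)
      (simp add: lattice_point_def udK_lattice_def Let_def s_def algebra_simps)
qed

lemma udK_lattice_udK_lattice:
  assumes "m > 0" "in_mZ_inf m J" "in_mZ_inf m K"
  shows "udK_lattice J K m (udK_lattice J K m p) = p"
proof -
  have "lattice_point m (udK_lattice J K m (udK_lattice J K m p)) = lattice_point m p"
    by (metis udK_lattice_point[OF assms] udK_udK)
  with assms(1) show ?thesis
    by (simp add: lattice_point_def prod_eq_iff)
qed

lemma udK_lattice_parity:
  assumes "m > 0" "in_mZ_inf (2 * m) J" "in_mZ_inf (2 * m) K"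
  shows "(even (fst (udK_lattice J K m p)) \<longleftrightarrow> even (fst p)) \<and>
      (even (snd (udK_lattice J K m p)) \<longleftrightarrow> even (snd p)) \<or>
    (even (fst (udK_lattice J K m p)) \<longleftrightarrow> even (snd p)) \<and>
      (even (snd (udK_lattice J K m p)) \<longleftrightarrow> even (fst p))"
proof -
  have parity: "udK_term_lattice L m n = 0 \<or> even (udK_term_lattice L m n - n)"
    if L: "in_mZ_inf (2 * m) L" for L n
  proof (cases "L = \<infinity>")
    case False
    then obtain k where "L = ereal (2 * m * real_of_int k)"
      using L by (auto simp: in_mZ_inf_def)
    moreover have "\<lfloor>2 * m * real_of_int k / m\<rfloor> = 2 * k"
      using assms(1) floor_of_int[of "2 * k"] by simp
    ultimately show ?thesis
      by (simp add: udK_term_lattice_def max_def)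
  qed (simp add: udK_term_lattice_def)
  show ?thesis
    using parity[OF assms(2), of "fst p + snd p"] parity[OF assms(3), of "fst p + snd p"]
    by (simp add: udK_lattice_def Let_def) presburger
qed

lemma udK_lattice_fst_plus_snd: "fst (udK_lattice J K m p) + snd (udK_lattice J K m p) = fst p + snd p"
  by (simp add: udK_lattice_def Let_def)

lemma pair_measure_distr_normalized_count_space:
  fixes f g :: "'a::countable \<Rightarrow> ennreal" and e :: "'a \<Rightarrow> real"
  shows "distr (density (count_space UNIV) (\<lambda>x. f x / integral\<^sup>N (count_space UNIV) f)) borel e
      \<Otimes>\<^sub>M distr (density (count_space UNIV) (\<lambda>y. g y / integral\<^sup>N (count_space UNIV) g)) borel e
    = distr (density (count_space UNIV)
        (\<lambda>(x, y). f x / integral\<^sup>N (count_space UNIV) f * (g y / integral\<^sup>N (count_space UNIV) g)))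
        (borel \<Otimes>\<^sub>M borel) (\<lambda>(x, y). (e x, e y))"
proof -
  have "finite_measure (density (count_space UNIV) (\<lambda>y. g y / integral\<^sup>N (count_space UNIV) g))"
    by (rule finite_measure_normalized_density) simp
  then have "sigma_finite_measure
      (distr (density (count_space UNIV) (\<lambda>y. g y / integral\<^sup>N (count_space UNIV) g)) borel e)"
    by (intro finite_measure.sigma_finite_measure finite_measure.finite_measure_distr) simp_all
  then show ?thesis
    by (simp add: pair_measure_distr pair_measure_normalized_density sigma_finite_measure_count_space
        pair_measure_countable)
qed

lemma udK_invariant_lattice_density:
  assumes "m > 0" "in_mZ_inf m J" "in_mZ_inf m K" "\<And>p. r (udK_lattice J K m p) = r p"
  shows "distr (distr (density (count_space UNIV) r) (borel \<Otimes>\<^sub>M borel) (lattice_point m))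
      (borel \<Otimes>\<^sub>M borel) (udK J K)
    = distr (density (count_space UNIV) r) (borel \<Otimes>\<^sub>M borel) (lattice_point m)"
proof -
  let ?D = "density (count_space UNIV) r" and ?G = "udK_lattice J K m"
  have "bij ?G"
    by (rule o_bij[of ?G]) (simp_all add: fun_eq_iff udK_lattice_udK_lattice[OF assms(1-3)])
  have "distr (distr ?D (borel \<Otimes>\<^sub>M borel) (lattice_point m)) (borel \<Otimes>\<^sub>M borel) (udK J K)
      = distr ?D (borel \<Otimes>\<^sub>M borel) (udK J K \<circ> lattice_point m)"
    by (rule distr_distr) (simp_all add: space_pair_measure)
  also have "udK J K \<circ> lattice_point m = lattice_point m \<circ> ?G"
    by (simp add: fun_eq_iff udK_lattice_point[OF assms(1-3)])
  also have "distr ?D (borel \<Otimes>\<^sub>M borel) (lattice_point m \<circ> ?G)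
      = distr (distr ?D (count_space UNIV) ?G) (borel \<Otimes>\<^sub>M borel) (lattice_point m)"
    by (rule distr_distr[symmetric]) (simp_all add: space_pair_measure)
  also have "distr ?D (count_space UNIV) ?G = ?D"
    using \<open>bij ?G\<close>
    by (intro distr_density_involution)
      (simp_all add: distr_bij_count_space udK_lattice_udK_lattice[OF assms(1-3)] assms(4))
  finally show ?thesis .
qed

lemma sstbGeo_weight_mult:
  assumes "m > 0" "\<theta> > 0" "\<kappa> \<ge> 0" "J \<noteq> -\<infinity>" "K \<noteq> -\<infinity>"
  shows "sstbGeo_weight (1 - \<theta>) (c / m) ((J - ereal c) / ereal m) \<kappa> (fst p)
      * sstbGeo_weight (1 - \<theta>) (c / m) ((K - ereal c) / ereal m) \<kappa> (snd p)
    = ennreal (\<theta> powi (fst p + snd p) * ((if even (fst p) then 1 else \<kappa>) * (if even (snd p) then 1 else \<kappa>)))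
      * indicator (udK_box J K c) (lattice_point m p)"
proof -
  have lower: "c / m \<le> real_of_int i \<longleftrightarrow> c \<le> m * real_of_int i" for i
    using assms(1) by (simp add: pos_divide_le_eq mult.commute)
  have upper: "ereal (real_of_int i) \<le> (L - ereal c) / ereal m \<longleftrightarrow> ereal (m * real_of_int i) \<le> L - ereal c"
    if "L \<noteq> -\<infinity>" for L i
    using assms(1) that by (cases L) (auto simp: pos_le_divide_eq mult.commute)
  have "0 \<le> \<theta> powi i * (if even i then 1 else \<kappa>)" for i
    using assms(2,3) by simp
  then show ?thesis
    using assms(2)
    by (auto simp: sstbGeo_weight_def udK_box_def lattice_point_def indicator_def lower upper assms(4,5)
        power_int_add ennreal_mult[symmetric] ac_simps simp del: ennreal_mult ennreal_mult' ennreal_mult'')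
qed

lemma in_mZ_inf_double_of_diff:
  assumes "in_mZ_inf m (ereal c)" "in_mZ_inf (2 * m) (J - ereal (2 * c))"
  shows "in_mZ_inf (2 * m) J"
proof (cases J)
  case (real j)
  obtain k n :: int where "c = m * real_of_int k" "j - 2 * c = 2 * m * real_of_int n"
    using assms real by (auto simp: in_mZ_inf_def)
  then have "j = 2 * m * real_of_int (n + k)"
    by (simp add: algebra_simps)
  then show ?thesis
    using real unfolding in_mZ_inf_def by (intro disjI2 exI[of _ "n + k"]) simp
qed (use assms(2) in \<open>simp_all add: in_mZ_inf_def\<close>)

lemma udK_invariant_sstbGeo:
  assumes "m > 0" "\<theta> > 0" "ereal c < J / 2" "ereal c < K / 2" "in_mZ_inf m J" "in_mZ_inf m K"
    and "\<kappa> = 1 \<or> \<kappa> \<ge> 0 \<and> in_mZ_inf (2 * m) J \<and> in_mZ_inf (2 * m) K"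
  shows "udK_invariant J K (sstbGeo (1 - \<theta>) (c / m) ((J - ereal c) / ereal m) \<kappa> m)
    (sstbGeo (1 - \<theta>) (c / m) ((K - ereal c) / ereal m) \<kappa> m)"
proof -
  define f where "f = sstbGeo_weight (1 - \<theta>) (c / m) ((J - ereal c) / ereal m) \<kappa>"
  define g where "g = sstbGeo_weight (1 - \<theta>) (c / m) ((K - ereal c) / ereal m) \<kappa>"
  let ?G = "udK_lattice J K m"
  have JK: "J \<noteq> -\<infinity>" "K \<noteq> -\<infinity>"
    using assms(5,6) by (auto simp: in_mZ_inf_def)
  have parity: "(if even (fst (?G p)) then 1 else \<kappa>) * (if even (snd (?G p)) then 1 else \<kappa>)
      = (if even (fst p) then 1 else \<kappa>) * (if even (snd p) then 1 else \<kappa>)" for p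
    using assms(7) udK_lattice_parity[OF assms(1), of J K p] by auto
  have "\<kappa> \<ge> 0"
    using assms(7) by auto
  have "f (fst (?G p)) * g (snd (?G p)) = f (fst p) * g (snd p)" for p
    by (simp add: f_def g_def sstbGeo_weight_mult[OF assms(1,2) \<open>\<kappa> \<ge> 0\<close> JK] parity
        udK_lattice_fst_plus_snd udK_lattice_point[OF assms(1,5,6), symmetric]
        udK_in_box_iff[OF assms(3,4)] indicator_def)
  then have "(\<lambda>(x, y). f x / integral\<^sup>N (count_space UNIV) f * (g y / integral\<^sup>N (count_space UNIV) g))
      (?G p)
    = (\<lambda>(x, y). f x / integral\<^sup>N (count_space UNIV) f * (g y / integral\<^sup>N (count_space UNIV) g)) p"
    for p
    by (simp add: case_prod_beta divide_ennreal_def ac_simps)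
  moreover have "(\<lambda>(x, y). (m * real_of_int x, m * real_of_int y)) = lattice_point m"
    by (simp add: fun_eq_iff lattice_point_def)
  ultimately show ?thesis
    unfolding udK_invariant_def sstbGeo_def f_def[symmetric] g_def[symmetric]
    by (simp add: pair_measure_distr_normalized_count_space udK_invariant_lattice_density[OF assms(1,5,6)])
qed

lemma AE_pair_measure_fst_snd:
  assumes "sigma_finite_measure M" "sigma_finite_measure N"
    and "AE x in M. P x" "AE y in N. Q y"
    and [measurable]: "Measurable.pred M P" "Measurable.pred N Q"
  shows "AE p in M \<Otimes>\<^sub>M N. P (fst p) \<and> Q (snd p)"
proof -
  interpret pair_sigma_finite M N
    using assms(1,2) by (simp add: pair_sigma_finite_def)
  have "AE x in M. AE y in N. P x \<and> Q y"
    using assms(3)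
  proof eventually_elim
    case (elim x)
    show ?case
      using assms(4) by eventually_elim (simp add: elim)
  qed
  then show ?thesis
    by (intro AE_pair_measure) simp_all
qed

lemma real_prob_sigma_finite: "real_prob M \<Longrightarrow> sigma_finite_measure M"
  by (simp add: real_prob_def prob_space_imp_sigma_finite)

lemma real_prob_pair_sets: "real_prob M \<Longrightarrow> real_prob N \<Longrightarrow> sets (M \<Otimes>\<^sub>M N) = sets (borel \<Otimes>\<^sub>M borel)"
  by (intro sets_pair_measure_cong) (simp_all add: real_prob_def)

lemma real_prob_measurable: "real_prob M \<Longrightarrow> measurable M L = measurable borel L"
  by (intro measurable_cong_sets) (simp_all add: real_prob_def)

lemma real_prob_pair_measurable:
  "real_prob M \<Longrightarrow> real_prob N \<Longrightarrow> measurable (M \<Otimes>\<^sub>M N) L = measurable (borel \<Otimes>\<^sub>M borel) L"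
  by (intro measurable_cong_sets) (simp_all add: real_prob_pair_sets)

lemma distr_pair_swap_self:
  assumes "real_prob M"
  shows "distr (M \<Otimes>\<^sub>M M) (borel \<Otimes>\<^sub>M borel) (\<lambda>(x, y). (y, x)) = M \<Otimes>\<^sub>M M"
proof -
  interpret pair_sigma_finite M M
    using real_prob_sigma_finite[OF assms] by (simp add: pair_sigma_finite_def)
  have "distr (M \<Otimes>\<^sub>M M) (borel \<Otimes>\<^sub>M borel) (\<lambda>(x, y). (y, x))
      = distr (M \<Otimes>\<^sub>M M) (M \<Otimes>\<^sub>M M) (\<lambda>(x, y). (y, x))"
    using assms by (intro distr_cong) (simp_all add: real_prob_pair_sets)
  also have "\<dots> = M \<Otimes>\<^sub>M M"
    by (rule distr_pair_swap[symmetric])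
  finally show ?thesis .
qed

lemma udK_invariant_if_AE_swap:
  assumes "real_prob M" "AE p in M \<Otimes>\<^sub>M M. udK J K p = (snd p, fst p)"
  shows "udK_invariant J K M M"
proof -
  have "distr (M \<Otimes>\<^sub>M M) (borel \<Otimes>\<^sub>M borel) (udK J K)
      = distr (M \<Otimes>\<^sub>M M) (borel \<Otimes>\<^sub>M borel) (\<lambda>(x, y). (y, x))"
    using assms by (intro distr_cong_AE) (simp_all add: real_prob_pair_measurable case_prod_beta)
  then show ?thesis
    unfolding udK_invariant_def using distr_pair_swap_self[OF assms(1)] by simp
qed

lemma udK_invariant_equal_parameters: "real_prob M \<Longrightarrow> udK_invariant J J M M"
  by (rule udK_invariant_if_AE_swap) (simp_all add: udK_def)

lemma udK_swap_below_half:
  assumes "J \<le> K" "ereal x \<le> J / 2" "ereal u \<le> J / 2"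
  shows "udK J K (x, u) = (u, x)"
proof -
  have "ereal (x + u) \<le> J"
    using assms(2,3) by (cases J) auto
  then show ?thesis
    using assms(1) by (simp add: udK_eq_shift udK_shift_def udK_term_eq_0)
qed

lemma udK_fixes_half:
  assumes "J \<noteq> -\<infinity>" "J / 2 \<le> ereal u" "ereal u \<le> K - J / 2"
  shows "udK J K (real_of_ereal J / 2, u) = (real_of_ereal J / 2, u)"
  using assms by (cases J; cases K) (auto simp: udK_def udK_term_def)

lemma udK_shifted_swap:
  assumes "j \<le> k" "j / 2 \<le> x" "j / 2 \<le> u"
  shows "udK (ereal j) (ereal k) (x, u + (k - j)) = (u, x + (k - j))"
  using assms by (auto simp: udK_def udK_term_def)

lemma udK_invariant_below_half:
  assumes "real_prob M" "J \<le> K" "AE x in M. ereal x \<le> J / 2"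
  shows "udK_invariant J K M M"
proof (rule udK_invariant_if_AE_swap[OF assms(1)])
  have "AE p in M \<Otimes>\<^sub>M M. ereal (fst p) \<le> J / 2 \<and> ereal (snd p) \<le> J / 2"
    using assms(1,3)
    by (intro AE_pair_measure_fst_snd) (simp_all add: real_prob_sigma_finite real_prob_measurable)
  then show "AE p in M \<Otimes>\<^sub>M M. udK J K p = (snd p, fst p)"
    by eventually_elim (metis udK_swap_below_half[OF assms(2)] prod.collapse)
qed

lemma udK_invariant_point_mass_half:
  assumes "real_prob M" "J \<noteq> -\<infinity>" "AE x in M. J / 2 \<le> ereal x \<and> ereal x \<le> K - J / 2"
  shows "udK_invariant J K (return borel (real_of_ereal J / 2)) M"
proof -
  let ?a = "real_of_ereal J / 2"
  let ?N = "return borel ?a \<Otimes>\<^sub>M M"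
  have "real_prob (return borel ?a)"
    by (simp add: real_prob_def prob_space_return)
  then have "AE p in ?N. fst p = ?a \<and> (J / 2 \<le> ereal (snd p) \<and> ereal (snd p) \<le> K - J / 2)"
    using assms(1,3)
    by (intro AE_pair_measure_fst_snd) (simp_all add: AE_return real_prob_sigma_finite real_prob_measurable)
  then have "AE p in ?N. udK J K p = p"
    by eventually_elim (metis udK_fixes_half[OF assms(2)] prod.collapse)
  then have "distr ?N (borel \<Otimes>\<^sub>M borel) (udK J K) = distr ?N (borel \<Otimes>\<^sub>M borel) (\<lambda>p. p)"
    using \<open>real_prob (return borel ?a)\<close> assms(1) by (intro distr_cong_AE) (simp_all add: real_prob_pair_measurable)
  also have "\<dots> = ?N"
    by (metis distr_id2 real_prob_pair_sets[OF \<open>real_prob (return borel ?a)\<close> assms(1)])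
  finally show ?thesis
    unfolding udK_invariant_def .
qed

lemma udK_invariant_shifted_copy:
  assumes "real_prob M" "J < K" "J \<noteq> -\<infinity>" "K < \<infinity>" "AE x in M. J / 2 \<le> ereal x"
  shows "udK_invariant J K M (distr M borel (\<lambda>x. x + real_of_ereal (K - J)))"
proof -
  obtain j k where J: "J = ereal j" and K: "K = ereal k" and "j \<le> k"
    using assms(2-4) by (cases J; cases K) auto
  define L where "L = k - j"
  define S :: "real \<times> real \<Rightarrow> real \<times> real" where "S = (\<lambda>(x, y). (x, y + L))"
  have [measurable]: "S \<in> measurable (borel \<Otimes>\<^sub>M borel) (borel \<Otimes>\<^sub>M borel)"
    unfolding S_def by measurable
  have "M \<Otimes>\<^sub>M distr M borel (\<lambda>y. y + L) = distr M borel (\<lambda>x. x) \<Otimes>\<^sub>M distr M borel (\<lambda>y. y + L)"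
    using assms(1) by (simp add: distr_id2 real_prob_def)
  also have "\<dots> = distr (M \<Otimes>\<^sub>M M) (borel \<Otimes>\<^sub>M borel) S"
    using assms(1) unfolding S_def
    by (intro pair_measure_distr) (simp_all add: real_prob_measurable real_prob_def
        prob_space_imp_sigma_finite prob_space.prob_space_distr)
  finally have prod: "M \<Otimes>\<^sub>M distr M borel (\<lambda>y. y + L) = distr (M \<Otimes>\<^sub>M M) (borel \<Otimes>\<^sub>M borel) S" .
  have "AE p in M \<Otimes>\<^sub>M M. j / 2 \<le> fst p \<and> j / 2 \<le> snd p"
    using assms(1,5) J
    by (intro AE_pair_measure_fst_snd) (simp_all add: real_prob_sigma_finite real_prob_measurable)
  then have swap: "AE p in M \<Otimes>\<^sub>M M. (udK J K \<circ> S) p = (S \<circ> (\<lambda>(x, y). (y, x))) p"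
    by eventually_elim (simp add: S_def L_def J K case_prod_beta udK_shifted_swap[OF \<open>j \<le> k\<close>])
  have "distr (distr (M \<Otimes>\<^sub>M M) (borel \<Otimes>\<^sub>M borel) S) (borel \<Otimes>\<^sub>M borel) (udK J K)
      = distr (M \<Otimes>\<^sub>M M) (borel \<Otimes>\<^sub>M borel) (udK J K \<circ> S)"
    using assms(1) by (intro distr_distr) (simp_all add: real_prob_pair_measurable)
  also have "\<dots> = distr (M \<Otimes>\<^sub>M M) (borel \<Otimes>\<^sub>M borel) (S \<circ> (\<lambda>(x, y). (y, x)))"
    using assms(1) swap by (intro distr_cong_AE) (simp_all add: real_prob_pair_measurable)
  also have "\<dots> = distr (distr (M \<Otimes>\<^sub>M M) (borel \<Otimes>\<^sub>M borel) (\<lambda>(x, y). (y, x))) (borel \<Otimes>\<^sub>M borel) S"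
    using assms(1) by (intro distr_distr[symmetric]) (simp_all add: real_prob_pair_measurable)
  also have "\<dots> = distr (M \<Otimes>\<^sub>M M) (borel \<Otimes>\<^sub>M borel) S"
    by (simp add: distr_pair_swap_self[OF assms(1)])
  finally show ?thesis
    unfolding udK_invariant_def prod[symmetric] by (simp add: J K L_def)
qed

theorem proposition3p2:
  fixes J K :: ereal
  assumes "J \<noteq> -\<infinity>" and "K \<noteq> -\<infinity>"
  shows
    \<comment> \<open>(a)(i)\<close>
    "(\<forall>(c::real) (lam::real).
        ereal c < J / 2 \<and> ereal c < K / 2 \<and> ((J = \<infinity> \<or> K = \<infinity>) \<longrightarrow> lam > 0) \<longrightarrow>
        udK_invariant J K (stExp lam c (J - ereal c)) (stExp lam c (K - ereal c)))
   \<and> \<comment> \<open>(a)(ii)\<close>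
     (\<forall>(c::real) (m::real) (\<theta>::real) (\<kappa>::real).
        ereal c < J / 2 \<and> ereal c < K / 2 \<and> m > 0 \<and>
        in_mZ_inf m (ereal c) \<and> in_mZ_inf m J \<and> in_mZ_inf m K \<and>
        ((in_mZ_inf m (J - ereal (2*c)) \<and> in_mZ_inf m (K - ereal (2*c)) \<and>
            0 < \<theta> \<and> \<theta> < 1 \<and> \<kappa> = 1)
         \<or> (in_mZ_inf (2*m) (J - ereal (2*c)) \<and> in_mZ_inf (2*m) (K - ereal (2*c)) \<and>
            0 < \<theta> \<and> \<theta> < 1 \<and> 0 < \<kappa> \<and> \<kappa> \<noteq> 1)
         \<or> (in_mZ m (J - ereal (2*c)) \<and> in_mZ m (K - ereal (2*c)) \<and>
            1 \<le> \<theta> \<and> \<kappa> = 1)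
         \<or> (in_mZ_inf (2*m) (J - ereal (2*c)) \<and> in_mZ_inf (2*m) (K - ereal (2*c)) \<and>
            1 \<le> \<theta> \<and> 0 < \<kappa> \<and> \<kappa> \<noteq> 1)) \<longrightarrow>
        udK_invariant J K
          (sstbGeo (1 - \<theta>) (c / m) ((J - ereal c) / ereal m) \<kappa> m)
          (sstbGeo (1 - \<theta>) (c / m) ((K - ereal c) / ereal m) \<kappa> m))
   \<and> \<comment> \<open>(b)\<close>
     (J = K \<longrightarrow> (\<forall>M. real_prob M \<longrightarrow> udK_invariant J K M M))
   \<and> \<comment> \<open>(c)\<close>
     (J < K \<longrightarrow>
        (\<forall>M. real_prob M \<and> (AE x in M. ereal x \<le> J / 2) \<longrightarrow> udK_invariant J K M M)
      \<and> (\<forall>M. real_prob M \<and> (AE x in M. J / 2 \<le> ereal x \<and> ereal x \<le> K - J / 2) \<longrightarrow>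
            udK_invariant J K (return borel (real_of_ereal J / 2)) M)
      \<and> (K < \<infinity> \<longrightarrow>
          (\<forall>M. real_prob M \<and> (AE x in M. J / 2 \<le> ereal x) \<longrightarrow>
            udK_invariant J K M (distr M borel (\<lambda>x. x + real_of_ereal (K - J))))))"
  using assms
  apply (intro conjI allI impI)
  subgoal by (blast intro: udK_invariant_stExp)
  subgoal for c m \<theta> \<kappa>
    by (rule udK_invariant_sstbGeo) (use in_mZ_inf_double_of_diff[of m c J] in_mZ_inf_double_of_diff[of m c K] in auto)
  subgoal by (simp add: udK_invariant_equal_parameters)
  subgoal by (blast intro: udK_invariant_below_half less_imp_le)
  subgoal by (blast intro: udK_invariant_point_mass_half)
  subgoal by (blast intro: udK_invariant_shifted_copy)
  done

end
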